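(* Let $R$ be a finite local Frobenius ring with maximal ideal $M$, not a field and of odd characteristic, with a fixed primitive additive character $\psi$, and let $\tau$ be a non-primitive multiplicative character of $R$. Then for every $a\in R^\times$, $$\frac{1}{|M^\perp|}\sum_{b\in 1+M^\perp}|K_\tau(ab)|^2=|R|\,(1+\sigma(a)).$$
   Context: All rings are finite and commutative with identity; $R^\times$ is the unit group. $M^\perp=\{r\in R: rm=0\ \forall m\in M\}$. An additive character $(R,+)\to\mathbb{C}^*$ is primitive if the only ideal on which it is identically $1$ is $(0)$; $R$ is Frobenius if such a character exists. A multiplicative character is a homomorphism $R^\times\to\mathbb{C}^*$; its conductor is $R$ if it is trivial, and otherwise the largest ideal $I\subseteq M$ such that it is identically $1$ on $1+I$; it is primitive if its conductor is $(0)$. $K_\tau(a)=\sum_{u\in R^\times}\tau(u)\psi(u+au^{-1})$. Odd characteristic means $R/M$ has odd characteristic; the quadratic character $\sigma:R^\times\to\{\pm1\}$ is $\sigma(u)=$ the quadratic (Legendre) character of the residue class of $u$ in the finite field $R/M$. *)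

theory Defs
  imports Complex_Main
begin

definition units_r :: "'a::comm_ring_1 set" where
  "units_r = {u. u dvd 1}"

definition inv_r :: "'a::comm_ring_1 \<Rightarrow> 'a" where
  "inv_r u = (THE v. u * v = 1)"

definition is_ideal :: "'a::comm_ring_1 set \<Rightarrow> bool" where
  "is_ideal I \<longleftrightarrow> 0 \<in> I \<and> (\<forall>x\<in>I. \<forall>y\<in>I. x + y \<in> I) \<and> (\<forall>r. \<forall>x\<in>I. r * x \<in> I)"

definition maximal_ideal :: "'a::comm_ring_1 set \<Rightarrow> bool" where
  "maximal_ideal M \<longleftrightarrow> is_ideal M \<and> M \<noteq> UNIV \<and>
     (\<forall>J. is_ideal J \<and> M \<subseteq> J \<longrightarrow> J = M \<or> J = UNIV)"

definition local_ring_with :: "'a::comm_ring_1 set \<Rightarrow> bool" where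
  "local_ring_with M \<longleftrightarrow> maximal_ideal M \<and> (\<forall>J. maximal_ideal J \<longrightarrow> J = M)"

definition annihilator :: "'a::comm_ring_1 set \<Rightarrow> 'a set" where
  "annihilator S = {r. \<forall>m\<in>S. r * m = 0}"

definition residue_char :: "'a::comm_ring_1 set \<Rightarrow> nat" where
  "residue_char M = (LEAST n. n > 0 \<and> (of_nat n :: 'a) \<in> M)"

definition additive_character :: "('a::comm_ring_1 \<Rightarrow> complex) \<Rightarrow> bool" where
  "additive_character \<psi> \<longleftrightarrow> (\<forall>x y. \<psi> (x + y) = \<psi> x * \<psi> y) \<and> (\<forall>x. \<psi> x \<noteq> 0)"

definition primitive_additive_character :: "('a::comm_ring_1 \<Rightarrow> complex) \<Rightarrow> bool" where
  "primitive_additive_character \<psi> \<longleftrightarrow> additive_character \<psi> \<and>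
     (\<forall>I. is_ideal I \<and> (\<forall>x\<in>I. \<psi> x = 1) \<longrightarrow> I = {0})"

text \<open>A multiplicative character is a homomorphism R^x -> C^*; only its values on units matter.\<close>
definition mult_character :: "('a::comm_ring_1 \<Rightarrow> complex) \<Rightarrow> bool" where
  "mult_character \<tau> \<longleftrightarrow> (\<forall>u\<in>units_r. \<forall>v\<in>units_r. \<tau> (u * v) = \<tau> u * \<tau> v) \<and>
     (\<forall>u\<in>units_r. \<tau> u \<noteq> 0)"

definition conductor :: "'a::comm_ring_1 set \<Rightarrow> ('a \<Rightarrow> complex) \<Rightarrow> 'a set" where
  "conductor M \<tau> = (if (\<forall>u\<in>units_r. \<tau> u = 1) then UNIV
     else (THE I. is_ideal I \<and> I \<subseteq> M \<and> (\<forall>x\<in>I. \<tau> (1 + x) = 1) \<and>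
            (\<forall>J. is_ideal J \<and> J \<subseteq> M \<and> (\<forall>x\<in>J. \<tau> (1 + x) = 1) \<longrightarrow> J \<subseteq> I)))"

definition primitive_mult_character :: "'a::comm_ring_1 set \<Rightarrow> ('a \<Rightarrow> complex) \<Rightarrow> bool" where
  "primitive_mult_character M \<tau> \<longleftrightarrow> conductor M \<tau> = {0}"

text \<open>Quadratic (Legendre) character of the residue class of u in the field R/M
  (for units u): 1 if u mod M is a square in R/M, -1 otherwise.\<close>
definition quad_char :: "'a::comm_ring_1 set \<Rightarrow> 'a \<Rightarrow> real" where
  "quad_char M u = (if (\<exists>w. u - w * w \<in> M) then 1 else -1)"

definition kloosterman :: "('a::comm_ring_1 \<Rightarrow> complex) \<Rightarrow> ('a \<Rightarrow> complex) \<Rightarrow> 'a \<Rightarrow> complex" where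
  "kloosterman \<psi> \<tau> a = (\<Sum>u\<in>units_r. \<tau> u * \<psi> (u + a * inv_r u))"

end

theory Submission
  imports Defs
begin

text \<open>
  Write \<open>A = M\<^sup>\<bottom>\<close>; it is the unique minimal ideal of \<open>R\<close>, and \<open>|A| |M| = |R|\<close>.
  Expanding \<open>|K\<^sub>\<tau>(a(1 + x))|\<^sup>2\<close> and summing over \<open>x \<in> A\<close>, the additive character sum over \<open>A\<close>
  detects whether \<open>u \<equiv> v (mod M)\<close>, so the mean square is \<open>|A|\<close> times a sum over pairs of
  congruent units. Since \<open>\<tau>\<close> is not primitive it is trivial on \<open>1 + A\<close>; translating by
  elements of \<open>A\<close> then shows that the sum over the class of \<open>v\<close> vanishes unless \<open>v\<^sup>2 \<equiv> a\<close>.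
  For such \<open>v\<close>, writing \<open>u = v(1 + m)\<close>, the phase \<open>u + a/u\<close> is unchanged for \<open>m \<in> A\<close>,
  while for \<open>m \<notin> A\<close> a shift \<open>v \<mapsto> v + h\<close> with \<open>h \<in> M\<close> multiplies the sum over the square
  roots by a nontrivial character value (here \<open>2\<close> must be a unit). What remains is
  \<open>|A|\<^sup>2\<close> times the number of square roots of \<open>a\<close> modulo \<open>M\<close>, which is \<open>2|M|\<close> or \<open>0\<close>.
\<close>

section \<open>Units and ideals\<close>

lemma units_rI: "u * v = (1::'a::comm_ring_1) \<Longrightarrow> u \<in> units_r"
  unfolding units_r_def by (metis dvdI mem_Collect_eq)

lemma units_r_mult_inv_r:
  fixes u :: "'a::comm_ring_1"
  assumes "u \<in> units_r"
  shows "u * inv_r u = 1"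
proof -
  from assms obtain k where k: "u * k = 1"
    unfolding units_r_def by (auto elim: dvdE)
  have unique: "v = k" if "u * v = 1" for v
  proof -
    have "v = (u * k) * v" using k by simp
    also have "\<dots> = (u * v) * k" by (simp only: ac_simps)
    finally show ?thesis using that by simp
  qed
  show ?thesis
    unfolding inv_r_def by (rule theI[where P = "\<lambda>v. u * v = 1", OF k unique])
qed

lemma inv_r_mult_units_r: "u \<in> units_r \<Longrightarrow> inv_r u * u = (1::'a::comm_ring_1)"
  using units_r_mult_inv_r by (simp only: mult.commute)

lemma inv_r_unique:
  fixes u :: "'a::comm_ring_1"
  assumes "u \<in> units_r" "u * v = 1"
  shows "inv_r u = v"
proof -
  have "inv_r u = (u * v) * inv_r u" using assms(2) by simp
  also have "\<dots> = (u * inv_r u) * v" by (simp only: ac_simps)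
  finally show ?thesis using units_r_mult_inv_r[OF assms(1)] by simp
qed

lemma mult_in_units_r: "u \<in> units_r \<Longrightarrow> v \<in> units_r \<Longrightarrow> u * v \<in> units_r"
  unfolding units_r_def using mult_dvd_mono[of u 1 v 1] by simp

lemma one_in_units_r: "1 \<in> units_r"
  unfolding units_r_def by simp

lemma power_in_units_r: "u \<in> units_r \<Longrightarrow> u ^ n \<in> units_r"
  unfolding units_r_def using dvd_power_same[of u 1 n] by simp

lemma is_ideal_0: "is_ideal I \<Longrightarrow> 0 \<in> I"
  unfolding is_ideal_def by auto

lemma is_ideal_add: "is_ideal I \<Longrightarrow> x \<in> I \<Longrightarrow> y \<in> I \<Longrightarrow> x + y \<in> I"
  unfolding is_ideal_def by auto

lemma is_ideal_mult_left: "is_ideal I \<Longrightarrow> x \<in> I \<Longrightarrow> r * x \<in> I"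
  unfolding is_ideal_def by auto

lemma is_ideal_mult_right: "is_ideal I \<Longrightarrow> x \<in> I \<Longrightarrow> x * r \<in> I"
  using is_ideal_mult_left[of I x r] by (simp add: mult.commute)

lemma is_ideal_uminus: "is_ideal I \<Longrightarrow> x \<in> I \<Longrightarrow> - x \<in> I"
  using is_ideal_mult_left[of I x "-1"] by simp

lemma is_ideal_diff: "is_ideal I \<Longrightarrow> x \<in> I \<Longrightarrow> y \<in> I \<Longrightarrow> x - y \<in> I"
  using is_ideal_add[of I x "-y"] is_ideal_uminus[of I y] by simp

lemma is_ideal_UNIV: "is_ideal UNIV"
  unfolding is_ideal_def by simp

lemma is_ideal_Int: "is_ideal I \<Longrightarrow> is_ideal J \<Longrightarrow> is_ideal (I \<inter> J)"
  unfolding is_ideal_def by blast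

lemma is_ideal_principal: "is_ideal (range (\<lambda>c. c * y))"
  unfolding is_ideal_def
proof (intro conjI ballI allI)
  show "0 \<in> range (\<lambda>c. c * y)"
    by (rule range_eqI[of _ _ 0]) simp
  fix x z assume "x \<in> range (\<lambda>c. c * y)" "z \<in> range (\<lambda>c. c * y)"
  then show "x + z \<in> range (\<lambda>c. c * y)"
    by (auto intro: range_eqI[of _ _ "_ + _"] simp: distrib_right)
next
  fix r x assume "x \<in> range (\<lambda>c. c * y)"
  then show "r * x \<in> range (\<lambda>c. c * y)"
    by (auto intro: range_eqI[of _ _ "r * _"] simp: mult.assoc)
qed

lemma is_ideal_annihilator: "is_ideal (annihilator S)"
  unfolding is_ideal_def annihilator_def by (auto simp: algebra_simps)

lemma is_ideal_eq_UNIV_if_one: "is_ideal I \<Longrightarrow> 1 \<in> I \<Longrightarrow> I = UNIV"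
  using is_ideal_mult_left[of I 1] by force

lemma exists_maximal_ideal_superset:
  fixes I :: "'a::{comm_ring_1,finite} set"
  assumes "is_ideal I" "I \<noteq> UNIV"
  shows "\<exists>J. maximal_ideal J \<and> I \<subseteq> J"
proof -
  let ?S = "{J. is_ideal J \<and> I \<subseteq> J \<and> J \<noteq> UNIV}"
  obtain J where J: "J \<in> ?S" and max: "\<forall>K\<in>?S. J \<subseteq> K \<longrightarrow> J = K"
    using finite_has_maximal2[of ?S I] assms by auto
  then have "maximal_ideal J"
    unfolding maximal_ideal_def by blast
  then show ?thesis using J by blast
qed

section \<open>Character sums\<close>

lemma sum_eq_0_if_reindex_scales:
  fixes F :: "'b \<Rightarrow> 'c::idom"
  assumes "bij_betw g S S" "\<And>x. x \<in> S \<Longrightarrow> F (g x) = k * F x" "k \<noteq> 1"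
  shows "sum F S = 0"
proof -
  have "sum F S = sum (\<lambda>x. F (g x)) S"
    using sum.reindex_bij_betw[OF assms(1), of F] by simp
  also have "\<dots> = k * sum F S"
    using assms(2) by (simp add: sum_distrib_left)
  finally have "(1 - k) * sum F S = 0"
    by (simp add: algebra_simps)
  then show ?thesis using assms(3) by simp
qed

lemma bij_betw_add_right:
  fixes c :: "'a::ab_group_add"
  assumes "\<And>x. x \<in> S \<Longrightarrow> x + c \<in> S" "\<And>x. x \<in> S \<Longrightarrow> x - c \<in> S"
  shows "bij_betw (\<lambda>x. x + c) S S"
  by (rule bij_betw_byWitness[of S "\<lambda>x. x - c"]) (use assms in auto)

lemma sequence_in_finite_repeats:
  fixes g :: "nat \<Rightarrow> 'a::finite"
  obtains i j where "i < j" "g i = g j"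
proof -
  have "\<not> inj g"
    using finite_imageD[of g UNIV] infinite_UNIV_nat by auto
  then obtain i j where "i \<noteq> j" "g i = g j"
    unfolding inj_def by blast
  then show ?thesis
    using that by (metis linorder_neqE_nat)
qed

lemma norm_eq_1_if_powers_repeat:
  fixes z :: complex
  assumes "z \<noteq> 0" "i < j" "z ^ i = z ^ j"
  shows "norm z = 1"
proof -
  have "z ^ i * z ^ (j - i) = z ^ i * 1"
    using assms(2,3) by (metis add_diff_inverse_nat less_imp_not_less mult_1_right power_add)
  then have "z ^ (j - i) = 1"
    using assms(1) by simp
  then show ?thesis
    using power_eq_1_iff assms(2) by fastforce
qed

context
  fixes \<psi> :: "'a::{comm_ring_1,finite} \<Rightarrow> complex"
  assumes \<psi>: "additive_character \<psi>"
begin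

lemma additive_character_add: "\<psi> (x + y) = \<psi> x * \<psi> y"
  using \<psi> unfolding additive_character_def by blast

lemma additive_character_nonzero: "\<psi> x \<noteq> 0"
  using \<psi> unfolding additive_character_def by blast

lemma additive_character_0: "\<psi> 0 = 1"
  using additive_character_add[of 0 0] additive_character_nonzero[of 0] by simp

lemma additive_character_of_nat_mult: "\<psi> (of_nat n * x) = \<psi> x ^ n"
  by (induction n) (simp_all add: additive_character_0 distrib_right additive_character_add)

lemma additive_character_norm: "norm (\<psi> x) = 1"
proof -
  obtain i j where "i < j" "of_nat i * x = of_nat j * x"
    using sequence_in_finite_repeats[of "\<lambda>n. of_nat n * x"] by blast
  then show ?thesis
    using norm_eq_1_if_powers_repeat[OF additive_character_nonzero]
    by (metis additive_character_of_nat_mult)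
qed

lemma additive_character_cnj: "cnj (\<psi> x) = \<psi> (- x)"
proof -
  have "\<psi> x * cnj (\<psi> x) = 1"
    using complex_norm_square[of "\<psi> x"] additive_character_norm by simp
  moreover have "\<psi> x * \<psi> (- x) = 1"
    using additive_character_add[of x "- x"] additive_character_0 by simp
  ultimately show ?thesis
    using additive_character_nonzero[of x] by (metis mult_left_cancel)
qed

end

lemma sum_primitive_additive_character_ideal:
  fixes \<psi> :: "'a::{comm_ring_1,finite} \<Rightarrow> complex"
  assumes \<psi>: "primitive_additive_character \<psi>" and I: "is_ideal I"
  shows "(\<Sum>y\<in>I. \<psi> (c * y)) = (if \<forall>y\<in>I. c * y = 0 then of_nat (card I) else 0)"
proof (cases "\<forall>y\<in>I. c * y = 0")
  case True
  with \<psi> show ?thesis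
    unfolding primitive_additive_character_def by (simp add: additive_character_0)
next
  case False
  then obtain y1 where y1: "y1 \<in> I" "c * y1 \<noteq> 0" by blast
  have "range (\<lambda>r. r * (c * y1)) \<noteq> {0}"
    using y1(2) by (metis mult_1 rangeI singletonD)
  then obtain r where r: "\<psi> (r * (c * y1)) \<noteq> 1"
    using \<psi> is_ideal_principal unfolding primitive_additive_character_def by blast
  have "(\<Sum>y\<in>I. \<psi> (c * y)) = 0"
  proof (rule sum_eq_0_if_reindex_scales)
    show "bij_betw (\<lambda>y. y + r * y1) I I"
      using I y1(1) by (intro bij_betw_add_right) (auto intro: is_ideal_add is_ideal_diff is_ideal_mult_left)
    show "\<psi> (c * (y + r * y1)) = \<psi> (r * (c * y1)) * \<psi> (c * y)" for y
      using \<psi> additive_character_add unfolding primitive_additive_character_def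
      by (metis distrib_left mult.commute mult.left_commute)
  qed (fact r)
  with False show ?thesis by (simp only: if_False)
qed

context
  fixes \<tau> :: "'a::{comm_ring_1,finite} \<Rightarrow> complex"
  assumes \<tau>: "mult_character \<tau>"
begin

lemma mult_character_mult: "u \<in> units_r \<Longrightarrow> v \<in> units_r \<Longrightarrow> \<tau> (u * v) = \<tau> u * \<tau> v"
  using \<tau> unfolding mult_character_def by blast

lemma mult_character_nonzero: "u \<in> units_r \<Longrightarrow> \<tau> u \<noteq> 0"
  using \<tau> unfolding mult_character_def by blast

lemma mult_character_1: "\<tau> 1 = 1"
  using mult_character_mult[OF one_in_units_r one_in_units_r]
    mult_character_nonzero[OF one_in_units_r] by simp

lemma mult_character_power: "u \<in> units_r \<Longrightarrow> \<tau> (u ^ n) = \<tau> u ^ n"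
  by (induction n) (simp_all add: mult_character_1 mult_character_mult power_in_units_r)

lemma mult_character_cnj_mult_self:
  assumes u: "u \<in> units_r"
  shows "cnj (\<tau> u) * \<tau> u = 1"
proof -
  obtain i j where "i < j" "u ^ i = u ^ j"
    using sequence_in_finite_repeats[of "\<lambda>n. u ^ n"] by blast
  then have "norm (\<tau> u) = 1"
    using norm_eq_1_if_powers_repeat[OF mult_character_nonzero[OF u]]
    by (metis mult_character_power[OF u])
  then show ?thesis
    using complex_norm_square[of "\<tau> u"] by (simp add: mult.commute)
qed

end

section \<open>Finite local rings\<close>

definition trivializing_ideal :: "'a::comm_ring_1 set \<Rightarrow> ('a \<Rightarrow> complex) \<Rightarrow> 'a set" where
  "trivializing_ideal M \<tau> = {x\<in>M. \<forall>r. \<tau> (1 + r * x) = 1}"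

locale finite_local_ring =
  fixes M :: "'a::{comm_ring_1,finite} set"
  assumes local_ring: "local_ring_with M"
begin

lemma ideal_M: "is_ideal M"
  using local_ring unfolding local_ring_with_def maximal_ideal_def by blast

lemmas zero_in_M = is_ideal_0[OF ideal_M]
  and add_in_M = is_ideal_add[OF ideal_M]
  and diff_in_M = is_ideal_diff[OF ideal_M]
  and uminus_in_M = is_ideal_uminus[OF ideal_M]
  and mult_left_in_M = is_ideal_mult_left[OF ideal_M]
  and mult_right_in_M = is_ideal_mult_right[OF ideal_M]

lemma one_notin_M: "1 \<notin> M"
  using local_ring is_ideal_eq_UNIV_if_one[OF ideal_M]
  unfolding local_ring_with_def maximal_ideal_def by blast

lemma units_r_iff_notin_M: "u \<in> units_r \<longleftrightarrow> u \<notin> M"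
proof
  show "u \<notin> M" if "u \<in> units_r"
    using that units_r_mult_inv_r[of u] mult_right_in_M[of u "inv_r u"] one_notin_M by auto
next
  assume u: "u \<notin> M"
  show "u \<in> units_r"
  proof (rule ccontr)
    assume not_unit: "u \<notin> units_r"
    have "1 \<notin> range (\<lambda>c. c * u)"
    proof
      assume "1 \<in> range (\<lambda>c. c * u)"
      then obtain c where "1 = c * u" by blast
      then have "u * c = 1" by (simp add: mult.commute)
      then show False using not_unit units_rI by blast
    qed
    then obtain J where J: "maximal_ideal J" "range (\<lambda>c. c * u) \<subseteq> J"
      using exists_maximal_ideal_superset[OF is_ideal_principal] by blast
    have "J = M"
      using local_ring J(1) unfolding local_ring_with_def by blast
    moreover have "u \<in> range (\<lambda>c. c * u)"
      by (rule range_eqI[of _ _ 1]) simp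
    ultimately show False
      using J(2) u by blast
  qed
qed

lemma mult_in_M_iff: "x * y \<in> M \<longleftrightarrow> x \<in> M \<or> y \<in> M"
proof
  assume "x * y \<in> M"
  then have "x * y \<notin> units_r"
    using units_r_iff_notin_M by blast
  then show "x \<in> M \<or> y \<in> M"
    using mult_in_units_r units_r_iff_notin_M by blast
qed (auto intro: mult_left_in_M mult_right_in_M)

lemma one_plus_in_units_r: "m \<in> M \<Longrightarrow> 1 + m \<in> units_r"
  unfolding units_r_iff_notin_M using one_notin_M diff_in_M[of "1 + m" m] by auto

lemma inv_r_diff_in_M_iff:
  assumes u: "u \<in> units_r" and v: "v \<in> units_r"
  shows "inv_r u - inv_r v \<in> M \<longleftrightarrow> u - v \<in> M"
proof -
  have "(inv_r u - inv_r v) * (u * v) = (u * inv_r u) * v - (v * inv_r v) * u"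
    by (simp add: algebra_simps)
  then have 1: "(inv_r u - inv_r v) * (u * v) = - (u - v)"
    using units_r_mult_inv_r[OF u] units_r_mult_inv_r[OF v] by simp
  have "(u - v) * (inv_r u * inv_r v) = (u * inv_r u) * inv_r v - (v * inv_r v) * inv_r u"
    by (simp add: algebra_simps)
  then have 2: "(u - v) * (inv_r u * inv_r v) = - (inv_r u - inv_r v)"
    using units_r_mult_inv_r[OF u] units_r_mult_inv_r[OF v] by simp
  show ?thesis
    using mult_right_in_M[of _ "u * v"] mult_right_in_M[of _ "inv_r u * inv_r v"] uminus_in_M 1 2
    by (metis minus_minus)
qed

lemma nonzero_ideal_meets_annihilator:
  assumes I: "is_ideal I" "I \<noteq> {0}"
  shows "\<exists>y\<in>I. y \<noteq> 0 \<and> y \<in> annihilator M"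
proof -
  obtain x0 where "x0 \<in> I" "x0 \<noteq> 0"
    using I is_ideal_0 by blast
  \<comment> \<open>a nonzero element of \<open>I\<close> generating a minimal principal ideal is killed by \<open>M\<close>\<close>
  then obtain x where x: "x \<in> I" "x \<noteq> 0"
    and min: "\<And>y. y \<in> I \<Longrightarrow> y \<noteq> 0 \<Longrightarrow> card (range (\<lambda>c. c * x)) \<le> card (range (\<lambda>c. c * y))"
    using ex_has_least_nat[of "\<lambda>y. y \<in> I \<and> y \<noteq> 0" x0 "\<lambda>y. card (range (\<lambda>c. c * y))"] by blast
  have "x * m = 0" if m: "m \<in> M" for m
  proof (rule ccontr)
    assume mx: "x * m \<noteq> 0"
    have sub: "range (\<lambda>c. c * (m * x)) \<subseteq> range (\<lambda>c. c * x)"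
    proof (rule image_subsetI)
      show "c * (m * x) \<in> range (\<lambda>c. c * x)" for c
        by (rule range_eqI[of _ _ "c * m"]) (simp add: mult.assoc)
    qed
    moreover have "m * x \<noteq> 0"
      using mx by (simp add: mult.commute)
    then have "card (range (\<lambda>c. c * x)) \<le> card (range (\<lambda>c. c * (m * x)))"
      by (intro min is_ideal_mult_left[OF I(1) x(1)])
    ultimately have "range (\<lambda>c. c * (m * x)) = range (\<lambda>c. c * x)"
      using card_mono[OF finite sub] by (intro card_subset_eq[OF finite sub]) simp
    moreover have "x \<in> range (\<lambda>c. c * x)"
      by (rule range_eqI[of _ _ 1]) simp
    ultimately obtain c where "x = c * (m * x)"
      by (metis imageE)
    then have e: "(1 - c * m) * x = 0"
      by (simp add: algebra_simps)
    have "1 - c * m \<in> units_r"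
      using one_plus_in_units_r[OF uminus_in_M[OF mult_left_in_M[OF m]]] by simp
    then have "x = inv_r (1 - c * m) * ((1 - c * m) * x)"
      by (simp add: mult.assoc[symmetric] inv_r_mult_units_r)
    with e x(2) show False by simp
  qed
  then show ?thesis
    using x unfolding annihilator_def by blast
qed

lemma annihilator_subset_M:
  assumes "M \<noteq> {0}"
  shows "annihilator M \<subseteq> M"
proof
  fix x assume x: "x \<in> annihilator M"
  obtain m where m: "m \<in> M" "m \<noteq> 0"
    using assms zero_in_M by blast
  show "x \<in> M"
  proof (rule ccontr)
    assume "x \<notin> M"
    then have "inv_r x * x * m = m"
      using units_r_iff_notin_M inv_r_mult_units_r[of x] by simp
    with x m show False
      unfolding annihilator_def by (simp add: mult.assoc)
  qed
qed

lemma annihilator_mult_cong: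
  assumes "x \<in> annihilator M" "y - z \<in> M"
  shows "x * y = x * z"
proof -
  have "x * (y - z) = 0"
    using assms unfolding annihilator_def by blast
  then show ?thesis by (simp add: right_diff_distrib)
qed

lemma card_residue_class: "card {v. v - w \<in> M} = card M"
proof -
  have "bij_betw (\<lambda>m. m + w) M {v. v - w \<in> M}"
    by (rule bij_betw_byWitness[where f' = "\<lambda>v. v - w"]) auto
  then show ?thesis by (simp add: bij_betw_same_card)
qed

lemma is_ideal_trivializing_ideal:
  assumes \<tau>: "mult_character \<tau>"
  shows "is_ideal (trivializing_ideal M \<tau>)"
  unfolding is_ideal_def
proof (intro conjI ballI allI)
  show "0 \<in> trivializing_ideal M \<tau>"
    unfolding trivializing_ideal_def using zero_in_M mult_character_1[OF \<tau>] by simp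
next
  fix s x assume x: "x \<in> trivializing_ideal M \<tau>"
  have "\<tau> (1 + r * (s * x)) = 1" for r
    using x unfolding trivializing_ideal_def by (simp add: mult.assoc[symmetric])
  then show "s * x \<in> trivializing_ideal M \<tau>"
    using x mult_left_in_M unfolding trivializing_ideal_def by blast
next
  fix x y assume x: "x \<in> trivializing_ideal M \<tau>" and y: "y \<in> trivializing_ideal M \<tau>"
  have xM: "x \<in> M" and yM: "y \<in> M"
    and x1: "\<And>r. \<tau> (1 + r * x) = 1" and y1: "\<And>r. \<tau> (1 + r * y) = 1"
    using x y unfolding trivializing_ideal_def by auto
  have "\<tau> (1 + r * (x + y)) = 1" for r
  proof -
    define e where "e = 1 + r * x"
    have e: "e \<in> units_r" "\<tau> e = 1"
      unfolding e_def using one_plus_in_units_r mult_left_in_M xM x1 by auto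
    have "1 + r * (x + y) = e * (1 + (inv_r e * r) * y)"
      using units_r_mult_inv_r[OF e(1)] unfolding e_def by (simp add: algebra_simps)
    also have "\<tau> \<dots> = \<tau> e * \<tau> (1 + (inv_r e * r) * y)"
      using e(1) one_plus_in_units_r[OF mult_left_in_M[OF yM]] by (rule mult_character_mult[OF \<tau>])
    finally show ?thesis
      using e(2) y1 by simp
  qed
  then show "x + y \<in> trivializing_ideal M \<tau>"
    using xM yM add_in_M unfolding trivializing_ideal_def by blast
qed

lemma conductor_eq_trivializing_ideal:
  assumes \<tau>: "mult_character \<tau>" and nontrivial: "\<not> (\<forall>u\<in>units_r. \<tau> u = 1)"
  shows "conductor M \<tau> = trivializing_ideal M \<tau>"
proof -
  let ?T = "trivializing_ideal M \<tau>"
  let ?ok = "\<lambda>J. is_ideal J \<and> J \<subseteq> M \<and> (\<forall>x\<in>J. \<tau> (1 + x) = 1)"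
  have T_def': "x \<in> ?T \<longleftrightarrow> x \<in> M \<and> (\<forall>r. \<tau> (1 + r * x) = 1)" for x
    unfolding trivializing_ideal_def by (rule mem_Collect_eq)
  have "\<tau> (1 + x) = 1" if "x \<in> ?T" for x
  proof -
    have "\<tau> (1 + 1 * x) = 1"
      using that unfolding T_def' by (elim conjE allE)
    then show ?thesis by simp
  qed
  moreover have "?T \<subseteq> M"
    using T_def' by blast
  ultimately have ok: "?ok ?T"
    using is_ideal_trivializing_ideal[OF \<tau>] by blast
  have largest: "J \<subseteq> ?T" if J: "?ok J" for J
  proof
    fix x assume x: "x \<in> J"
    have "\<tau> (1 + r * x) = 1" for r
      using J is_ideal_mult_left[of J x r] x by blast
    moreover have "x \<in> M"
      using J x by blast
    ultimately show "x \<in> ?T"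
      unfolding T_def' by blast
  qed
  have "conductor M \<tau> = (THE I. ?ok I \<and> (\<forall>J. ?ok J \<longrightarrow> J \<subseteq> I))"
    unfolding conductor_def using nontrivial by (simp only: if_False conj_assoc)
  also have "\<dots> = ?T"
  proof (rule the_equality)
    show "?ok ?T \<and> (\<forall>J. ?ok J \<longrightarrow> J \<subseteq> ?T)"
      using ok largest by blast
  next
    fix I assume I: "?ok I \<and> (\<forall>J. ?ok J \<longrightarrow> J \<subseteq> I)"
    then have "?T \<subseteq> I"
      using ok by blast
    moreover have "I \<subseteq> ?T"
      using I largest by blast
    ultimately show "I = ?T" by (rule subset_antisym[rotated])
  qed
  finally show ?thesis .
qed

end

section \<open>The annihilator of the maximal ideal\<close>

locale finite_local_frobenius_ring =
  finite_local_ring M for M :: "'a::{comm_ring_1,finite} set" +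
  fixes \<psi> :: "'a \<Rightarrow> complex"
  assumes primitive: "primitive_additive_character \<psi>"
    and not_field: "M \<noteq> {0}"
begin

lemmas annihilator_subset = annihilator_subset_M[OF not_field]

lemma additive: "additive_character \<psi>"
  using primitive unfolding primitive_additive_character_def by blast

lemmas \<psi>_add = additive_character_add[OF additive]
  and \<psi>_0 = additive_character_0[OF additive]


lemma annihilator_nonzero: "annihilator M \<noteq> {0}"
proof -
  have "(1 :: 'a) \<noteq> 0"
    using zero_in_M one_notin_M by auto
  then have "(UNIV :: 'a set) \<noteq> {0}"
    by (metis UNIV_I singletonD)
  then show ?thesis
    using nonzero_ideal_meets_annihilator[OF is_ideal_UNIV] by blast
qed

lemma sum_character_annihilator_subideal:
  assumes B: "is_ideal B" "B \<subseteq> annihilator M" "B \<noteq> {0}"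
  shows "(\<Sum>y\<in>B. \<psi> (c * y)) = (if c \<in> M then of_nat (card B) else 0)"
proof -
  have "(\<forall>y\<in>B. c * y = 0) \<longleftrightarrow> c \<in> M"
  proof
    assume zero: "\<forall>y\<in>B. c * y = 0"
    obtain y where y: "y \<in> B" "y \<noteq> 0"
      using B(3) is_ideal_0[OF B(1)] by blast
    show "c \<in> M"
    proof (rule ccontr)
      assume "c \<notin> M"
      then have "y = inv_r c * (c * y)"
        using inv_r_mult_units_r[of c] units_r_iff_notin_M by (simp add: mult.assoc[symmetric])
      with zero y show False by simp
    qed
  next
    show "\<forall>y\<in>B. c * y = 0" if "c \<in> M"
      using B(2) that unfolding annihilator_def by (auto simp: mult.commute)
  qed
  then show ?thesis
    using sum_primitive_additive_character_ideal[OF primitive B(1)] by simp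
qed

lemma card_annihilator_subideal:
  assumes B: "is_ideal B" "B \<subseteq> annihilator M" "B \<noteq> {0}"
  shows "card B * card M = card (UNIV :: 'a set)"
proof -
  have "(\<forall>c. y * c = 0) \<longleftrightarrow> y = 0" for y :: 'a
    by (metis mult_1_right mult_zero_left)
  then have "(\<Sum>c\<in>UNIV. \<psi> (y * c)) = (if y = 0 then of_nat (card (UNIV :: 'a set)) else 0)" for y
    using sum_primitive_additive_character_ideal[OF primitive is_ideal_UNIV, of y] by simp
  then have "of_nat (card (UNIV :: 'a set)) = (\<Sum>y\<in>B. \<Sum>c\<in>UNIV. \<psi> (y * c))"
    using is_ideal_0[OF B(1)] by simp
  also have "\<dots> = (\<Sum>c\<in>UNIV. \<Sum>y\<in>B. \<psi> (c * y))"
    by (subst sum.swap) (simp only: mult.commute)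
  also have "\<dots> = of_nat (card M * card B)"
    using sum_character_annihilator_subideal[OF B] by (simp add: sum.If_cases)
  finally show ?thesis
    by (simp only: of_nat_eq_iff mult.commute)
qed

lemma card_annihilator: "card (annihilator M) * card M = card (UNIV :: 'a set)"
  by (rule card_annihilator_subideal[OF is_ideal_annihilator subset_refl annihilator_nonzero])

lemma annihilator_minimal:
  assumes B: "is_ideal B" "B \<subseteq> annihilator M" "B \<noteq> {0}"
  shows "B = annihilator M"
proof -
  have "card M > 0"
    using zero_in_M by (auto simp: card_gt_0_iff)
  moreover have "card B * card M = card (annihilator M) * card M"
    using card_annihilator_subideal[OF B] card_annihilator by simp
  ultimately have "card B = card (annihilator M)"
    by (metis mult_cancel2 less_irrefl)
  then show ?thesis
    using card_subset_eq[OF finite B(2)] by simp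
qed

lemma nonprimitive_mult_character_trivial_on_annihilator:
  assumes \<tau>: "mult_character \<tau>" and nonprimitive: "\<not> primitive_mult_character M \<tau>"
    and x: "x \<in> annihilator M"
  shows "\<tau> (1 + x) = 1"
proof (cases "\<forall>u\<in>units_r. \<tau> u = 1")
  case True
  then show ?thesis
    using x annihilator_subset one_plus_in_units_r by blast
next
  case False
  let ?T = "trivializing_ideal M \<tau>"
  have T: "is_ideal ?T"
    by (rule is_ideal_trivializing_ideal[OF \<tau>])
  have "?T \<noteq> {0}"
    using nonprimitive conductor_eq_trivializing_ideal[OF \<tau> False]
    unfolding primitive_mult_character_def by simp
  then have "?T \<inter> annihilator M \<noteq> {0}"
    using nonzero_ideal_meets_annihilator[OF T] by blast
  then have "?T \<inter> annihilator M = annihilator M"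
    using is_ideal_Int[OF T is_ideal_annihilator] by (intro annihilator_minimal) auto
  with x have "x \<in> ?T" by blast
  then have "\<tau> (1 + 1 * x) = 1"
    unfolding trivializing_ideal_def by blast
  then show ?thesis by simp
qed

lemma nonprimitive_mult_character_add_annihilator:
  assumes \<tau>: "mult_character \<tau>" and nonprimitive: "\<not> primitive_mult_character M \<tau>"
    and u: "u \<in> units_r" and x: "x \<in> annihilator M"
  shows "\<tau> (u + x) = \<tau> u"
proof -
  have y: "inv_r u * x \<in> annihilator M"
    using is_ideal_mult_left[OF is_ideal_annihilator x] .
  have "u * (1 + inv_r u * x) = u + (u * inv_r u) * x"
    by (simp add: algebra_simps)
  then have "\<tau> (u + x) = \<tau> (u * (1 + inv_r u * x))"
    using units_r_mult_inv_r[OF u] by simp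
  also have "\<dots> = \<tau> u * \<tau> (1 + inv_r u * x)"
    using u one_plus_in_units_r y annihilator_subset by (intro mult_character_mult[OF \<tau>]) auto
  also have "\<dots> = \<tau> u"
    using nonprimitive_mult_character_trivial_on_annihilator[OF \<tau> nonprimitive y] by simp
  finally show ?thesis .
qed

end

section \<open>The mean square of Kloosterman sums\<close>

locale kloosterman_setting = finite_local_frobenius_ring M \<psi>
  for M :: "'a::{comm_ring_1,finite} set" and \<psi> :: "'a \<Rightarrow> complex" +
  fixes \<tau> :: "'a \<Rightarrow> complex" and a :: 'a
  assumes mult_char: "mult_character \<tau>"
    and nonprimitive: "\<not> primitive_mult_character M \<tau>"
    and odd_char: "odd (residue_char M)"
    and a_unit: "a \<in> units_r"
begin

lemmas \<tau>_mult = mult_character_mult[OF mult_char]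

definition phase :: "'a \<Rightarrow> 'a" where
  "phase u = u + a * inv_r u"

definition square_roots :: "'a set" where
  "square_roots = {v. v * v - a \<in> M}"

definition residue_class :: "'a \<Rightarrow> 'a set" where
  "residue_class v = {u. u - v \<in> M}"

lemma two_notin_M: "(2::'a) \<notin> M"
proof
  assume "(2::'a) \<in> M"
  then have ex: "0 < (2::nat) \<and> (of_nat 2 :: 'a) \<in> M" by simp
  have "residue_char M \<le> 2"
    unfolding residue_char_def by (rule Least_le) (rule ex)
  moreover have char: "0 < residue_char M \<and> (of_nat (residue_char M) :: 'a) \<in> M"
    unfolding residue_char_def by (rule LeastI) (rule ex)
  moreover have "residue_char M \<noteq> 1"
    using char one_notin_M by auto
  ultimately have "residue_char M = 2" by linarith
  with odd_char show False by simp
qed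

lemma residue_class_subset_units_r:
  assumes "v \<in> units_r"
  shows "residue_class v \<subseteq> units_r"
proof
  fix u assume "u \<in> residue_class v"
  then have "u - v \<in> M" unfolding residue_class_def by simp
  moreover have "v \<notin> M" using assms units_r_iff_notin_M by blast
  ultimately show "u \<in> units_r"
    using diff_in_M[of u "u - v"] units_r_iff_notin_M by auto
qed

lemma square_roots_subset_units_r: "square_roots \<subseteq> units_r"
proof
  fix v assume "v \<in> square_roots"
  then have "v * v - a \<in> M" unfolding square_roots_def by simp
  moreover have "a \<notin> M" using a_unit units_r_iff_notin_M by blast
  ultimately show "v \<in> units_r"
    using diff_in_M[of "v * v" "v * v - a"] mult_left_in_M units_r_iff_notin_M by auto
qed

lemma bij_betw_add_residue_class:
  assumes "x \<in> M"
  shows "bij_betw (\<lambda>u. u + x) (residue_class v) (residue_class v)"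
proof (rule bij_betw_add_right)
  fix u assume "u \<in> residue_class v"
  then have uv: "u - v \<in> M" unfolding residue_class_def by simp
  have e: "u + x - v = (u - v) + x" "u - x - v = (u - v) - x"
    by (simp_all add: algebra_simps)
  show "u + x \<in> residue_class v"
    unfolding residue_class_def mem_Collect_eq e by (rule add_in_M[OF uv assms])
  show "u - x \<in> residue_class v"
    unfolding residue_class_def mem_Collect_eq e by (rule diff_in_M[OF uv assms])
qed

lemma bij_betw_add_square_roots:
  assumes h: "h \<in> M"
  shows "bij_betw (\<lambda>v. v + h) square_roots square_roots"
proof (rule bij_betw_add_right)
  fix v assume "v \<in> square_roots"
  then have vv: "v * v - a \<in> M" unfolding square_roots_def by simp
  have e: "(v + h) * (v + h) - a = (v * v - a) + h * (v + v + h)"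
    "(v - h) * (v - h) - a = (v * v - a) + h * (h - v - v)"
    by (simp_all add: algebra_simps)
  show "v + h \<in> square_roots" "v - h \<in> square_roots"
    unfolding square_roots_def mem_Collect_eq e by (rule add_in_M[OF vv mult_right_in_M[OF h]])+
qed

lemma phase_add_annihilator:
  assumes v: "v \<in> units_r" and u: "u \<in> residue_class v" and x: "x \<in> annihilator M"
  shows "phase (u + x) = phase u + x * (1 - a * inv_r v * inv_r v)"
proof -
  have xM: "x \<in> M"
    using x annihilator_subset by blast
  have uv: "u - v \<in> M" and wv: "(u + x) - v \<in> M"
    using u bij_betw_add_residue_class[OF xM, of v] unfolding residue_class_def bij_betw_def by auto
  have uU: "u \<in> units_r" and wU: "u + x \<in> units_r"
    using residue_class_subset_units_r[OF v] uv wv unfolding residue_class_def by auto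
  define iu where "iu = inv_r u"
  define iw where "iw = inv_r (u + x)"
  have "a * iw = a * iw * (u * iu)"
    using units_r_mult_inv_r[OF uU] unfolding iu_def by simp
  also have "\<dots> = a * iu * ((u + x) * iw) - x * (a * iu * iw)"
    by (simp add: algebra_simps)
  also have "\<dots> = a * iu - x * (a * iu * iw)"
    using units_r_mult_inv_r[OF wU] unfolding iw_def by simp
  finally have "phase (u + x) = phase u + x * (1 - a * iu * iw)"
    unfolding phase_def iu_def iw_def by (simp add: algebra_simps)
  \<comment> \<open>since \<open>x\<close> annihilates \<open>M\<close>, the factor \<open>1 - a/(u(u + x))\<close> only matters modulo \<open>M\<close>\<close>
  moreover have "inv_r v - iu \<in> M" "inv_r v - iw \<in> M"
    unfolding iu_def iw_def using inv_r_diff_in_M_iff[OF v] uU wU uv wv uminus_in_M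
    by (metis minus_diff_eq)+
  then have "a * (inv_r v * (inv_r v - iw) + iw * (inv_r v - iu)) \<in> M"
    by (intro mult_left_in_M add_in_M)
  then have "(1 - a * iu * iw) - (1 - a * inv_r v * inv_r v) \<in> M"
    by (simp add: algebra_simps)
  then have "x * (1 - a * iu * iw) = x * (1 - a * inv_r v * inv_r v)"
    by (rule annihilator_mult_cong[OF x])
  ultimately show ?thesis by simp
qed

definition residue_class_sum :: "'a \<Rightarrow> complex" where
  "residue_class_sum v = (\<Sum>u\<in>residue_class v. \<tau> u * cnj (\<tau> v) * \<psi> (phase u - phase v))"

lemma residue_class_sum_eq_0:
  assumes v: "v \<in> units_r" "v \<notin> square_roots"
  shows "residue_class_sum v = 0"
proof -
  define c where "c = 1 - a * inv_r v * inv_r v"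
  have "c * (v * v) = v * v - a * (v * inv_r v) * (v * inv_r v)"
    unfolding c_def by (simp add: algebra_simps)
  then have "c * (v * v) = v * v - a"
    using units_r_mult_inv_r[OF v(1)] by simp
  then have "c \<notin> M"
    using v(2) mult_right_in_M[of c "v * v"] unfolding square_roots_def by auto
  then have c: "c \<in> units_r"
    using units_r_iff_notin_M by blast
  obtain z where z: "z \<in> annihilator M" "\<psi> z \<noteq> 1"
    using primitive is_ideal_annihilator annihilator_nonzero
    unfolding primitive_additive_character_def by blast
  define x where "x = inv_r c * z"
  have x: "x \<in> annihilator M"
    unfolding x_def using is_ideal_mult_left[OF is_ideal_annihilator z(1)] .
  have "x * c = (inv_r c * c) * z"
    unfolding x_def by (simp only: ac_simps)
  then have xc: "x * c = z"
    using inv_r_mult_units_r[OF c] by simp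
  show ?thesis
    unfolding residue_class_sum_def
  proof (rule sum_eq_0_if_reindex_scales)
    show "bij_betw (\<lambda>u. u + x) (residue_class v) (residue_class v)"
      using x annihilator_subset by (intro bij_betw_add_residue_class) blast
    show "\<tau> (u + x) * cnj (\<tau> v) * \<psi> (phase (u + x) - phase v)
        = \<psi> z * (\<tau> u * cnj (\<tau> v) * \<psi> (phase u - phase v))"
      if u: "u \<in> residue_class v" for u
    proof -
      have "\<tau> (u + x) = \<tau> u"
        using residue_class_subset_units_r[OF v(1)] u x
        by (intro nonprimitive_mult_character_add_annihilator[OF mult_char nonprimitive]) auto
      moreover have "phase (u + x) - phase v = z + (phase u - phase v)"
        using phase_add_annihilator[OF v(1) u x] xc unfolding c_def by simp
      then have "\<psi> (phase (u + x) - phase v) = \<psi> z * \<psi> (phase u - phase v)"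
        by (simp only: \<psi>_add)
      ultimately show ?thesis
        by (simp add: ac_simps)
    qed
  qed (fact z(2))
qed

lemma residue_class_sum_eq:
  assumes v: "v \<in> units_r"
  shows "residue_class_sum v = (\<Sum>m\<in>M. \<tau> (1 + m) * \<psi> (phase (v * (1 + m)) - phase v))"
proof -
  have "bij_betw (\<lambda>m. v * (1 + m)) M (residue_class v)"
  proof (rule bij_betw_byWitness[where f' = "\<lambda>u. inv_r v * u - 1"])
    show "\<forall>m\<in>M. inv_r v * (v * (1 + m)) - 1 = m"
      using inv_r_mult_units_r[OF v] by (simp add: mult.assoc[symmetric])
    show "\<forall>u\<in>residue_class v. v * (1 + (inv_r v * u - 1)) = u"
      using units_r_mult_inv_r[OF v] by (simp add: mult.assoc[symmetric])
    show "(\<lambda>m. v * (1 + m)) ` M \<subseteq> residue_class v"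
      unfolding residue_class_def by (auto simp: algebra_simps intro: mult_right_in_M)
    have "inv_r v * u - 1 = inv_r v * (u - v)" for u
      using inv_r_mult_units_r[OF v] by (simp add: algebra_simps)
    then show "(\<lambda>u. inv_r v * u - 1) ` residue_class v \<subseteq> M"
      unfolding residue_class_def by (auto intro: mult_left_in_M)
  qed
  then have "residue_class_sum v
      = (\<Sum>m\<in>M. \<tau> (v * (1 + m)) * cnj (\<tau> v) * \<psi> (phase (v * (1 + m)) - phase v))"
    unfolding residue_class_sum_def by (simp add: sum.reindex_bij_betw[symmetric])
  also have "\<dots> = (\<Sum>m\<in>M. \<tau> (1 + m) * \<psi> (phase (v * (1 + m)) - phase v))"
  proof (rule sum.cong[OF refl])
    fix m assume "m \<in> M"
    then have "\<tau> (v * (1 + m)) = \<tau> v * \<tau> (1 + m)"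
      using v one_plus_in_units_r by (intro \<tau>_mult)
    then show "\<tau> (v * (1 + m)) * cnj (\<tau> v) * \<psi> (phase (v * (1 + m)) - phase v)
        = \<tau> (1 + m) * \<psi> (phase (v * (1 + m)) - phase v)"
      using mult_character_cnj_mult_self[OF mult_char v] by (simp add: ac_simps)
  qed
  finally show ?thesis .
qed

lemma phase_mult_one_plus:
  assumes v: "v \<in> units_r" and m: "m \<in> M"
  shows "phase (v * (1 + m)) - phase v = m * v - a * m * inv_r v * inv_r (1 + m)"
proof -
  define iv where "iv = inv_r v"
  define ir where "ir = inv_r (1 + m)"
  have r: "1 + m \<in> units_r" using one_plus_in_units_r[OF m] .
  have viv: "v * iv = 1" unfolding iv_def using units_r_mult_inv_r[OF v] .
  have rir: "(1 + m) * ir = 1" unfolding ir_def using units_r_mult_inv_r[OF r] .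
  have "(v * (1 + m)) * (iv * ir) = (v * iv) * ((1 + m) * ir)"
    by (simp only: ac_simps)
  then have "inv_r (v * (1 + m)) = iv * ir"
    using viv rir by (intro inv_r_unique mult_in_units_r v r) simp
  then have "phase (v * (1 + m)) - phase v = v * (1 + m) + a * (iv * ir) - (v + a * iv)"
    unfolding phase_def iv_def by simp
  also have "\<dots> = m * v - a * m * iv * ir + a * iv * ((1 + m) * ir - 1)"
    by (simp add: algebra_simps)
  also have "\<dots> = m * v - a * m * iv * ir"
    using rir by simp
  finally show ?thesis unfolding iv_def ir_def .
qed

lemma phase_mult_one_plus_annihilator:
  assumes m: "m \<in> annihilator M" and v: "v \<in> square_roots"
  shows "phase (v * (1 + m)) = phase v"
proof -
  have vU: "v \<in> units_r" using v square_roots_subset_units_r by blast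
  have mM: "m \<in> M" using m annihilator_subset by blast
  define iv where "iv = inv_r v"
  define ir where "ir = inv_r (1 + m)"
  have r: "1 + m \<in> units_r" using one_plus_in_units_r[OF mM] .
  have viv: "v * iv = 1" unfolding iv_def using units_r_mult_inv_r[OF vU] .
  have rir: "(1 + m) * ir = 1" unfolding ir_def using units_r_mult_inv_r[OF r] .
  have "(v - a * iv * ir) * (v * (1 + m))
      = (v * v - a) + (v * v) * m + a - a * (v * iv) * ((1 + m) * ir)"
    by (simp add: algebra_simps)
  also have "\<dots> = (v * v - a) + (v * v) * m"
    using viv rir by simp
  finally have "(v - a * iv * ir) * (v * (1 + m)) \<in> M"
    using v mM unfolding square_roots_def by (auto intro: add_in_M mult_left_in_M)
  then have "v - a * iv * ir \<in> M"
    using mult_in_units_r[OF vU r] units_r_iff_notin_M mult_in_M_iff by blast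
  then have "m * (v - a * iv * ir) = 0"
    using m unfolding annihilator_def by blast
  then show ?thesis
    using phase_mult_one_plus[OF vU mM] unfolding iv_def ir_def by (simp add: algebra_simps)
qed

lemma exists_shift_in_annihilator:
  assumes m: "m \<in> M" "m \<notin> annihilator M"
  obtains h where "h \<in> M" "m * h \<in> annihilator M" "\<psi> (2 * (m * h)) \<noteq> 1"
proof -
  obtain x where x: "x \<in> M" "m * x \<noteq> 0"
    using m(2) unfolding annihilator_def by (auto simp: mult.commute)
  have "range (\<lambda>c. c * (m * x)) \<noteq> {0}"
    using x(2) by (metis mult_1 rangeI singletonD)
  then obtain z where z: "z \<in> range (\<lambda>c. c * (m * x))" "z \<noteq> 0" "z \<in> annihilator M"
    using nonzero_ideal_meets_annihilator[OF is_ideal_principal] by blast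
  then obtain c where zc: "z = m * (c * x)"
    by (auto simp: ac_simps)
  have "range (\<lambda>r. r * z) \<noteq> {0}"
    using z(2) by (metis mult_1 rangeI singletonD)
  then obtain r where r: "\<psi> (r * z) \<noteq> 1"
    using primitive is_ideal_principal unfolding primitive_additive_character_def by blast
  have two: "(2::'a) \<in> units_r"
    using two_notin_M units_r_iff_notin_M by blast
  define h where "h = r * (c * x) * inv_r 2"
  show ?thesis
  proof
    show "h \<in> M"
      unfolding h_def using x(1) by (intro mult_right_in_M mult_left_in_M)
    have mh: "m * h = (r * inv_r 2) * z"
      unfolding h_def zc by (simp only: ac_simps)
    then show "m * h \<in> annihilator M"
      using is_ideal_mult_left[OF is_ideal_annihilator z(3)] by simp
    have "2 * (m * h) = (2 * inv_r 2) * (r * z)"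
      unfolding mh by (simp only: ac_simps)
    then show "\<psi> (2 * (m * h)) \<noteq> 1"
      using r units_r_mult_inv_r[OF two] by simp
  qed
qed

lemma phase_increment_add:
  assumes v: "v \<in> square_roots" and h: "h \<in> M" and m: "m \<in> M"
    and mh: "m * h \<in> annihilator M"
  shows "phase ((v + h) * (1 + m)) - phase (v + h) = (phase (v * (1 + m)) - phase v) + 2 * (m * h)"
proof -
  have "v + h \<in> square_roots"
    using v bij_betw_add_square_roots[OF h] unfolding bij_betw_def by blast
  then have vU: "v \<in> units_r" and wU: "v + h \<in> units_r"
    using v square_roots_subset_units_r by blast+
  have r: "1 + m \<in> units_r" using one_plus_in_units_r[OF m] .
  define iv where "iv = inv_r v"
  define iw where "iw = inv_r (v + h)"
  define ir where "ir = inv_r (1 + m)"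
  have viv: "v * iv = 1" unfolding iv_def using units_r_mult_inv_r[OF vU] .
  have wiw: "(v + h) * iw = 1" unfolding iw_def using units_r_mult_inv_r[OF wU] .
  have rir: "(1 + m) * ir = 1" unfolding ir_def using units_r_mult_inv_r[OF r] .
  have "m * (v + h) - a * m * iw * ir - (m * v - a * m * iv * ir)
      = m * h * (1 + a * ir * iw * iv) - a * m * ir * (iw * (1 - v * iv) - iv * (1 - (v + h) * iw))"
    by (simp add: algebra_simps)
  also have "\<dots> = m * h * (1 + a * ir * iw * iv)"
    using viv wiw by simp
  finally have increment: "(phase ((v + h) * (1 + m)) - phase (v + h)) - (phase (v * (1 + m)) - phase v)
      = m * h * (1 + a * ir * iw * iv)"
    using phase_mult_one_plus[OF vU m] phase_mult_one_plus[OF wU m]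
    unfolding iv_def iw_def ir_def by simp
  \<comment> \<open>modulo \<open>M\<close> the factor \<open>1 + a/(v(v + h)(1 + m))\<close> is \<open>1 + a/v\<^sup>2 = 2\<close>\<close>
  have "(ir * iw * iv) * ((a - v * v) - h * v - m * ((v + h) * v))
      = a * ir * iw * iv - ((1 + m) * ir) * ((v + h) * iw) * (v * iv)"
    by (simp add: algebra_simps)
  also have "\<dots> = (1 + a * ir * iw * iv) - 2"
    using viv wiw rir by simp
  finally have "(1 + a * ir * iw * iv) - 2 \<in> M"
    using v m h unfolding square_roots_def
    by (metis (no_types, lifting) diff_in_M mult_left_in_M mult_right_in_M uminus_in_M mem_Collect_eq minus_diff_eq)
  then have "m * h * (1 + a * ir * iw * iv) = m * h * 2"
    by (rule annihilator_mult_cong[OF mh])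
  with increment show ?thesis
    by (simp add: algebra_simps)
qed

lemma sum_square_roots_phase_increment_eq_0:
  assumes m: "m \<in> M" "m \<notin> annihilator M"
  shows "(\<Sum>v\<in>square_roots. \<psi> (phase (v * (1 + m)) - phase v)) = 0"
proof -
  obtain h where h: "h \<in> M" "m * h \<in> annihilator M" "\<psi> (2 * (m * h)) \<noteq> 1"
    using exists_shift_in_annihilator[OF m] .
  show ?thesis
  proof (rule sum_eq_0_if_reindex_scales)
    show "bij_betw (\<lambda>v. v + h) square_roots square_roots"
      by (rule bij_betw_add_square_roots[OF h(1)])
    show "\<psi> (phase ((v + h) * (1 + m)) - phase (v + h))
        = \<psi> (2 * (m * h)) * \<psi> (phase (v * (1 + m)) - phase v)" if "v \<in> square_roots" for v
      unfolding phase_increment_add[OF that h(1) m(1) h(2)] \<psi>_add by (rule mult.commute)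
  qed (fact h(3))
qed

lemma sum_annihilator_inverse_difference:
  assumes u: "u \<in> units_r" and v: "v \<in> units_r"
  shows "(\<Sum>x\<in>annihilator M. \<psi> (a * (inv_r u - inv_r v) * x))
    = (if u - v \<in> M then of_nat (card (annihilator M)) else 0)"
proof -
  have "a * (inv_r u - inv_r v) \<in> M \<longleftrightarrow> u - v \<in> M"
    using mult_in_M_iff a_unit units_r_iff_notin_M inv_r_diff_in_M_iff[OF u v] by blast
  then show ?thesis
    using sum_character_annihilator_subideal[OF is_ideal_annihilator subset_refl annihilator_nonzero]
    by simp
qed

lemma sum_kloosterman_norm_square:
  "(\<Sum>b\<in>(\<lambda>x. 1 + x) ` annihilator M. kloosterman \<psi> \<tau> (a * b) * cnj (kloosterman \<psi> \<tau> (a * b)))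
    = of_nat (card (annihilator M)) * (\<Sum>v\<in>units_r. residue_class_sum v)"
proof -
  let ?A = "annihilator M"
  let ?F = "\<lambda>u v. \<tau> u * cnj (\<tau> v) * \<psi> (phase u - phase v)"
  have "kloosterman \<psi> \<tau> (a * (1 + x)) * cnj (kloosterman \<psi> \<tau> (a * (1 + x)))
      = (\<Sum>u\<in>units_r. \<Sum>v\<in>units_r. ?F u v * \<psi> (a * (inv_r u - inv_r v) * x))" for x
  proof -
    have "\<psi> (u + a * (1 + x) * inv_r u) * \<psi> (- (v + a * (1 + x) * inv_r v))
        = \<psi> (phase u - phase v) * \<psi> (a * (inv_r u - inv_r v) * x)" for u v
    proof -
      have "(u + a * (1 + x) * inv_r u) + - (v + a * (1 + x) * inv_r v)
          = (phase u - phase v) + a * (inv_r u - inv_r v) * x"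
        unfolding phase_def by (simp add: algebra_simps)
      then show ?thesis
        by (metis \<psi>_add)
    qed
    then show ?thesis
      unfolding kloosterman_def
      by (simp add: sum_product additive_character_cnj[OF additive] ac_simps)
  qed
  then have "(\<Sum>b\<in>(\<lambda>x. 1 + x) ` ?A. kloosterman \<psi> \<tau> (a * b) * cnj (kloosterman \<psi> \<tau> (a * b)))
      = (\<Sum>x\<in>?A. \<Sum>u\<in>units_r. \<Sum>v\<in>units_r. ?F u v * \<psi> (a * (inv_r u - inv_r v) * x))"
    by (simp add: sum.reindex inj_on_def)
  also have "\<dots> = (\<Sum>u\<in>units_r. \<Sum>v\<in>units_r. ?F u v * (\<Sum>x\<in>?A. \<psi> (a * (inv_r u - inv_r v) * x)))"
    by (simp add: sum_distrib_left sum.swap[of _ ?A])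
  also have "\<dots> = (\<Sum>u\<in>units_r. \<Sum>v\<in>units_r. of_nat (card ?A) * (if u - v \<in> M then ?F u v else 0))"
    by (intro sum.cong refl) (simp add: sum_annihilator_inverse_difference)
  also have "\<dots> = of_nat (card ?A) * (\<Sum>v\<in>units_r. \<Sum>u\<in>residue_class v. ?F u v)"
  proof -
    have inner: "(\<Sum>u\<in>units_r. if u - v \<in> M then ?F u v else 0) = (\<Sum>u\<in>residue_class v. ?F u v)"
      if "v \<in> units_r" for v
      using residue_class_subset_units_r[OF that]
      by (simp add: sum.If_cases residue_class_def Int_absorb1 Collect_conj_eq[symmetric])
    have "(\<Sum>v\<in>units_r. \<Sum>u\<in>units_r. if u - v \<in> M then ?F u v else 0)
        = (\<Sum>v\<in>units_r. \<Sum>u\<in>residue_class v. ?F u v)"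
      by (rule sum.cong[OF refl inner])
    then show ?thesis
      by (subst sum.swap) (simp add: sum_distrib_left[symmetric])
  qed
  finally show ?thesis
    unfolding residue_class_sum_def .
qed

lemma sum_residue_class_sum: "(\<Sum>v\<in>units_r. residue_class_sum v) = of_nat (card (annihilator M) * card square_roots)"
proof -
  let ?D = "\<lambda>m v. \<psi> (phase (v * (1 + m)) - phase v)"
  have "(\<Sum>v\<in>units_r. residue_class_sum v) = (\<Sum>v\<in>square_roots. residue_class_sum v)"
    using square_roots_subset_units_r residue_class_sum_eq_0 by (intro sum.mono_neutral_right) auto
  also have "\<dots> = (\<Sum>v\<in>square_roots. \<Sum>m\<in>M. \<tau> (1 + m) * ?D m v)"
    using square_roots_subset_units_r residue_class_sum_eq by (intro sum.cong[OF refl]) blast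
  also have "\<dots> = (\<Sum>m\<in>M. \<tau> (1 + m) * (\<Sum>v\<in>square_roots. ?D m v))"
    by (subst sum.swap) (simp only: sum_distrib_left)
  also have "\<dots> = (\<Sum>m\<in>M. if m \<in> annihilator M then of_nat (card square_roots) else 0)"
  proof (rule sum.cong[OF refl])
    fix m assume m: "m \<in> M"
    show "\<tau> (1 + m) * (\<Sum>v\<in>square_roots. ?D m v) = (if m \<in> annihilator M then of_nat (card square_roots) else 0)"
    proof (cases "m \<in> annihilator M")
      case True
      then have "\<tau> (1 + m) = 1"
        by (rule nonprimitive_mult_character_trivial_on_annihilator[OF mult_char nonprimitive])
      with True show ?thesis
        by (simp add: phase_mult_one_plus_annihilator \<psi>_0)
    qed (simp add: sum_square_roots_phase_increment_eq_0[OF m])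
  qed
  also have "\<dots> = of_nat (card (annihilator M) * card square_roots)"
    using annihilator_subset by (simp add: sum.If_cases Int_absorb1)
  finally show ?thesis .
qed

lemma card_square_roots: "card square_roots = (if \<exists>w. a - w * w \<in> M then 2 * card M else 0)"
proof (cases "\<exists>w. a - w * w \<in> M")
  case False
  then have "square_roots = {}"
    unfolding square_roots_def using uminus_in_M by fastforce
  with False show ?thesis by simp
next
  case True
  then obtain w where w: "a - w * w \<in> M" by blast
  have "w \<notin> M"
  proof
    assume "w \<in> M"
    then have "(a - w * w) + w * w \<in> M"
      using w add_in_M mult_left_in_M by blast
    then show False
      using a_unit units_r_iff_notin_M by simp
  qed
  \<comment> \<open>modulo the prime \<open>M\<close>, \<open>v\<^sup>2 - a = (v - w)(v + w)\<close>, and the two roots differ since \<open>2w \<notin> M\<close>\<close>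
  have roots: "square_roots = residue_class w \<union> residue_class (- w)"
  proof -
    have "v * v - a = (v - w) * (v - (- w)) - (a - w * w)" for v
      by (simp add: algebra_simps)
    then have "v * v - a \<in> M \<longleftrightarrow> (v - w) * (v - (- w)) \<in> M" for v
      using w add_in_M diff_in_M by (metis diff_add_cancel)
    then show ?thesis
      unfolding square_roots_def residue_class_def mult_in_M_iff by blast
  qed
  have "residue_class w \<inter> residue_class (- w) = {}"
  proof -
    have "(v - (- w)) - (v - w) = 2 * w" for v
      by (simp add: algebra_simps)
    then show ?thesis
      using diff_in_M mult_in_M_iff two_notin_M \<open>w \<notin> M\<close>
      unfolding residue_class_def by (metis (no_types, lifting) disjoint_iff mem_Collect_eq)
  qed
  then have "card square_roots = card (residue_class w) + card (residue_class (- w))"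
    unfolding roots by (intro card_Un_disjoint) auto
  also have "\<dots> = 2 * card M"
    unfolding residue_class_def card_residue_class by simp
  finally show ?thesis using True by simp
qed

lemma card_annihilator_mult_card_square_roots:
  "real (card (annihilator M) * card square_roots) = real (card (UNIV :: 'a set)) * (1 + quad_char M a)"
proof (cases "\<exists>w. a - w * w \<in> M")
  case True
  then have "card (annihilator M) * card square_roots = 2 * card (UNIV :: 'a set)"
    using card_square_roots card_annihilator by (simp add: mult.left_commute)
  with True show ?thesis
    unfolding quad_char_def by simp
qed (simp add: card_square_roots quad_char_def)

end

theorem mainTheorem9:
  fixes M :: "'a::{comm_ring_1, finite} set"
    and \<psi> \<tau> :: "'a \<Rightarrow> complex"
    and a :: 'a
  assumes "local_ring_with M"
    and "M \<noteq> {0}"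
    and "odd (residue_char M)"
    and "primitive_additive_character \<psi>"
    and "mult_character \<tau>"
    and "\<not> primitive_mult_character M \<tau>"
    and "a \<in> units_r"
  shows "(1 / real (card (annihilator M))) *
           (\<Sum>b\<in>(\<lambda>x. 1 + x) ` annihilator M. (cmod (kloosterman \<psi> \<tau> (a * b)))\<^sup>2)
         = real (card (UNIV :: 'a set)) * (1 + quad_char M a)"
proof -
  interpret kloosterman_setting M \<psi> \<tau> a
    by unfold_locales (use assms in simp_all)
  let ?A = "annihilator M"
  let ?S = "\<Sum>b\<in>(\<lambda>x. 1 + x) ` ?A. (cmod (kloosterman \<psi> \<tau> (a * b)))\<^sup>2"
  have "complex_of_real ?S = of_nat (card ?A) * of_nat (card ?A * card square_roots)"
    unfolding of_real_sum complex_norm_square sum_kloosterman_norm_square sum_residue_class_sum ..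
  also have "\<dots> = complex_of_real (real (card ?A) * real (card ?A * card square_roots))"
    by simp
  finally have S: "?S = real (card ?A) * real (card ?A * card square_roots)"
    by (simp only: of_real_eq_iff)
  have "card ?A > 0"
    using is_ideal_0[OF is_ideal_annihilator] by (auto simp: card_gt_0_iff)
  then have "1 / real (card ?A) * ?S = real (card ?A * card square_roots)"
    unfolding S by simp
  also have "\<dots> = real (card (UNIV :: 'a set)) * (1 + quad_char M a)"
    by (rule card_annihilator_mult_card_square_roots)
  finally show ?thesis .
qed

end
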